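(* Let $x\in\mathbb{R}$ and let $f:\mathbb{R}\to\mathbb{R}$ be analytic and nonzero on the closed interval between $0$ and $x$, with $f(0)=1$, and suppose $f(y)=\exp\big(\sum_{i=1}^{\infty}c_i y^i\big)$ for all $y$ in that interval, the series converging there; put $f_k(y)=\exp(c_k y^k)$. For $r>1$ and a finite nonempty $\mathcal{S}\subset\mathbb{N}^*$ define, for $n\ge|\mathcal{S}|$, \[ x_n(\mathcal{S},r,x)=\Big[\prod_{j\in\mathcal{S}}(r^j-1)^{1/j}\Big]\frac{x}{r^n},\qquad \mathcal{P}_f(\mathcal{S},r,x)=\prod_{n=|\mathcal{S}|}^{\infty}\Big[f\big(x_n(\mathcal{S},r,x)\big)\Big]^{\binom{n-1}{|\mathcal{S}|-1}}. \] Then for every positive integer $k$, \[ f_k(x)=\lim_{r\downarrow1}\ \frac{\prod_{\mathcal{S}_k:\ |\mathcal{S}_k|\text{ odd}}\mathcal{P}_f(\mathcal{S}_k,r,x)}{\prod_{\mathcal{S}_k:\ |\mathcal{S}_k|\text{ even}}\mathcal{P}_f(\mathcal{S}_k,r,x)}, \] where $\mathcal{S}_k$ ranges over the subsets of $\mathbb{N}^*$ whose largest element is $k$.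
   Context: $\mathbb{N}^*$ is the set of positive integers and $|\mathcal{S}|$ is the cardinality of $\mathcal{S}$. The $c_i$ are the Taylor coefficients at $0$ of $\log f$ and $f_k$ is called the $k$-th component of $f$. *)

theory Defs
  imports "HOL-Analysis.Analysis"
begin

definition real_analytic_on :: "(real \<Rightarrow> real) \<Rightarrow> real set \<Rightarrow> bool" where
  "real_analytic_on f A \<longleftrightarrow>
     (\<forall>a\<in>A. \<exists>e>0. \<exists>b::nat \<Rightarrow> real. \<forall>y. \<bar>y - a\<bar> < e \<longrightarrow> (\<lambda>n. b n * (y - a) ^ n) sums f y)"

definition component :: "(nat \<Rightarrow> real) \<Rightarrow> nat \<Rightarrow> real \<Rightarrow> real" where
  "component c k y = exp (c k * y ^ k)"

definition xn :: "nat set \<Rightarrow> real \<Rightarrow> real \<Rightarrow> nat \<Rightarrow> real" where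
  "xn S r x n = (\<Prod>j\<in>S. (r ^ j - 1) powr (1 / real j)) * x / r ^ n"

definition Pf :: "(real \<Rightarrow> real) \<Rightarrow> nat set \<Rightarrow> real \<Rightarrow> real \<Rightarrow> real" where
  "Pf f S r x = (\<Prod>m. f (xn S r x (m + card S)) ^ ((m + card S - 1) choose (card S - 1)))"

definition subsets_max :: "nat \<Rightarrow> nat set set" where
  "subsets_max k = {S. S \<subseteq> {1..k} \<and> k \<in> S}"

end

theory Submission
  imports Defs
begin

(*
  Write A(S,r) = prod_{j in S} (r^j - 1)^(1/j), so that x_n = A x / r^n, and
  log f(x rho) = sum_i d_i rho^(i+1) with d_i = c_(i+1) x^(i+1).  Expanding every log f(x_n),
  interchanging the (absolutely convergent) double sum and using the negative binomial series
  sum_m C(m+s-1, s-1) t^(m+s) = (t/(1-t))^s gives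
    log P_f(S,r,x) = sum_i d_i A^(i+1) / (r^(i+1) - 1)^|S| = sum_i d_i prod_{j in S} w_j(i+1),
  where w_j(n) = (r^j - 1)^(n/j) / (r^n - 1).  The alternating sum over the sets with largest
  element k is then sum_i d_i w_k(i+1) prod_{j<k} (1 - w_j(i+1)).  Since w_n(n) = 1, the terms
  with i+1 < k vanish; the term i+1 = k tends to d_(k-1) = c_k x^k because w_j(k) -> 0 for
  j < k as r -> 1+; and the terms with i+1 > k are bounded by ((r^k - 1)^(1/k))^(i+1-k), so
  their sum tends to 0.
*)

lemma sums_negative_binomial:
  fixes t :: real and s :: nat
  assumes t: "0 \<le> t" "t < 1" and s: "s \<ge> 1"
  shows "(\<lambda>m. real ((m + s - 1) choose (s - 1)) * t ^ (m + s)) sums ((t / (1 - t)) ^ s)"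
proof -
  have coeff: "((- real s) gchoose m) * (-t) ^ m = real ((m + s - 1) choose (s - 1)) * t ^ m" for m
  proof -
    have "(- real s) gchoose m = (-1) ^ m * ((real m + real s - 1) gchoose m)"
      by (subst gbinomial_negated_upper) simp
    also have "real m + real s - 1 = real (m + s - 1)"
      using s by simp
    also have "real (m + s - 1) gchoose m = real ((m + s - 1) choose m)"
      by (simp only: binomial_gbinomial)
    also have "(m + s - 1) choose m = (m + s - 1) choose (s - 1)"
      using s by (subst binomial_symmetric) auto
    finally show ?thesis
      by (simp add: power_minus')
  qed
  have "(\<lambda>m. ((- real s) gchoose m) * (-t) ^ m) sums (1 + - t) powr (- real s)"
    using t by (intro gen_binomial_real) simp
  moreover have "(1 + - t) powr (- real s) = 1 / (1 - t) ^ s"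
    using t by (simp add: powr_minus powr_realpow divide_inverse)
  ultimately have "(\<lambda>m. real ((m + s - 1) choose (s - 1)) * t ^ m) sums (1 / (1 - t) ^ s)"
    by (simp add: coeff)
  from sums_mult2[OF this, of "t ^ s"] show ?thesis
    by (simp add: power_add mult_ac power_divide)
qed

lemma sums_swap_dominated:
  fixes a b :: "nat \<Rightarrow> nat \<Rightarrow> real"
  assumes dom: "\<And>m i. \<bar>a m i\<bar> \<le> b m i"
    and b: "\<And>m. b m sums B m" and B: "summable B"
    and rows: "\<And>m. a m sums R m" and cols: "\<And>i. (\<lambda>m. a m i) sums C i"
  shows "summable C" and "R sums (\<Sum>i. C i)"
proof -
  have has_sum: "(g has_sum s) UNIV" if "g summable_on UNIV" "g sums s" for g :: "nat \<Rightarrow> real" and s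
    using that by (metis has_sum_imp_sums has_sum_infsum sums_unique2)
  have b0: "0 \<le> b m i" for m i
    using dom[of m i] by linarith
  have "(\<lambda>(m, i). b m i) summable_on UNIV \<times> UNIV"
  proof (rule summable_on_SigmaI)
    show "((\<lambda>i. (\<lambda>(m, i). b m i) (m, i)) has_sum B m) UNIV" for m
      using sums_nonneg_imp_has_sum[OF b b0] by simp
    have "0 \<le> B m" for m
      using sums_le[OF _ sums_zero b[of m]] b0 by simp
    then show "B summable_on UNIV"
      using B by (intro summable_nonneg_imp_summable_on)
  qed (simp add: b0)
  then have "(\<lambda>p. norm (case_prod a p)) summable_on UNIV \<times> UNIV"
    by (rule Infinite_Sum.abs_summable_on_comparison_test'[where f = "case_prod a"]) (use dom in auto)
  then have summ: "(\<lambda>(m, i). a m i) summable_on UNIV \<times> UNIV"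
    by (rule abs_summable_summable)
  then obtain S where S: "((\<lambda>(m, i). a m i) has_sum S) (UNIV \<times> UNIV)"
    by (auto simp: summable_on_def)
  have "(R has_sum S) UNIV"
  proof (rule has_sum_Sigma'[OF S])
    show "((\<lambda>i. (\<lambda>(m, i). a m i) (m, i)) has_sum R m) UNIV" for m
      using summable_on_SigmaD1[OF summ] rows by (simp add: has_sum)
  qed
  moreover have "(C has_sum S) UNIV"
  proof -
    have S': "((\<lambda>(i, m). a m i) has_sum S) (UNIV \<times> UNIV)"
      using has_sum_swap[THEN iffD1, OF S] by simp
    then have summ': "(\<lambda>(i, m). a m i) summable_on UNIV \<times> UNIV"
      unfolding summable_on_def by blast
    show ?thesis
    proof (rule has_sum_Sigma'[OF S'])
      show "((\<lambda>m. (\<lambda>(i, m). a m i) (i, m)) has_sum C i) UNIV" for i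
        using summable_on_SigmaD1[OF summ'] cols by (simp add: has_sum)
    qed
  qed
  ultimately show "summable C" "R sums (\<Sum>i. C i)"
    by (metis has_sum_imp_sums sums_summable sums_unique)+
qed

lemma sums_negative_binomial_power:
  fixes t A :: real
  assumes t: "0 \<le> t" "t < 1" and s: "s \<ge> 1" and n: "n \<ge> 1"
  shows "(\<lambda>m. real ((m + s - 1) choose (s - 1)) * (A * t ^ (m + s)) ^ n) sums (A ^ n * (t ^ n / (1 - t ^ n)) ^ s)"
proof -
  have "0 \<le> t ^ n" "t ^ n < 1"
    using t n power_strict_mono[of t 1 n] by simp_all
  from sums_mult[OF sums_negative_binomial[OF this s], of "A ^ n"]
  have "(\<lambda>m. A ^ n * (real ((m + s - 1) choose (s - 1)) * (t ^ n) ^ (m + s))) sums (A ^ n * (t ^ n / (1 - t ^ n)) ^ s)" .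
  moreover have "A ^ n * (real ((m + s - 1) choose (s - 1)) * (t ^ n) ^ (m + s))
      = real ((m + s - 1) choose (s - 1)) * (A * t ^ (m + s)) ^ n" for m
    by (simp add: power_mult_distrib flip: power_mult) (simp add: mult.commute mult.left_commute)
  ultimately show ?thesis
    by (simp only:)
qed

lemma summable_negative_binomial_geometric:
  fixes t A :: real
  assumes t: "0 \<le> t" "t < 1" and A: "0 \<le> A" "A * t ^ s < 1" and s: "s \<ge> 1"
  shows "summable (\<lambda>m. real ((m + s - 1) choose (s - 1)) * (A * t ^ (m + s) / (1 - A * t ^ (m + s))))"
proof (rule summable_comparison_test')
  define bin where "bin m = real ((m + s - 1) choose (s - 1))" for m
  show "summable (\<lambda>m. A / (1 - A * t ^ s) * (bin m * t ^ (m + s)))"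
    using sums_negative_binomial[OF t s] by (intro summable_mult sums_summable) (simp add: bin_def)
  fix m
  have \<rho>: "0 \<le> A * t ^ (m + s)" "A * t ^ (m + s) \<le> A * t ^ s"
    using A t by (auto intro!: mult_left_mono power_decreasing)
  then have "norm (bin m * (A * t ^ (m + s) / (1 - A * t ^ (m + s)))) = bin m * (A * t ^ (m + s) / (1 - A * t ^ (m + s)))"
    using A by (simp add: bin_def)
  also have "\<dots> \<le> bin m * (A * t ^ (m + s) / (1 - A * t ^ s))"
    using \<rho> A by (intro mult_left_mono divide_left_mono) (auto simp: bin_def)
  also have "\<dots> = A / (1 - A * t ^ s) * (bin m * t ^ (m + s))"
    by simp
  finally show "norm (bin m * (A * t ^ (m + s) / (1 - A * t ^ (m + s)))) \<le> A / (1 - A * t ^ s) * (bin m * t ^ (m + s))" .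
qed

lemma sums_negative_binomial_power_series:
  fixes d :: "nat \<Rightarrow> real"
  assumes d: "\<And>i. \<bar>d i\<bar> \<le> M" and t: "0 \<le> t" "t < 1"
    and A: "0 \<le> A" "A * t ^ s < 1" and s: "s \<ge> 1"
  shows "summable (\<lambda>i. d i * A ^ Suc i * (t ^ Suc i / (1 - t ^ Suc i)) ^ s)"
    and "(\<lambda>m. real ((m + s - 1) choose (s - 1)) * (\<Sum>i. d i * (A * t ^ (m + s)) ^ Suc i))
           sums (\<Sum>i. d i * A ^ Suc i * (t ^ Suc i / (1 - t ^ Suc i)) ^ s)"
proof -
  define bin where "bin m = real ((m + s - 1) choose (s - 1))" for m
  define \<rho> where "\<rho> m = A * t ^ (m + s)" for m
  have \<rho>: "0 \<le> \<rho> m" "\<rho> m < 1" for m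
    using A t mult_left_mono[OF power_decreasing[of s "m + s" t], of A] by (auto simp: \<rho>_def)
  have geometric: "(\<lambda>i. \<rho> m ^ Suc i) sums (\<rho> m / (1 - \<rho> m))" for m
    using sums_mult[OF geometric_sums[of "\<rho> m"], of "\<rho> m"] \<rho>[of m] by simp
  have dom: "\<bar>bin m * (d i * \<rho> m ^ Suc i)\<bar> \<le> bin m * (M * \<rho> m ^ Suc i)" for m i
    using d[of i] \<rho>(1)[of m] by (simp add: bin_def abs_mult mult_left_mono mult_right_mono)
  have dominant: "(\<lambda>i. bin m * (M * \<rho> m ^ Suc i)) sums (bin m * (M * (\<rho> m / (1 - \<rho> m))))" for m
    using geometric by (intro sums_mult)
  have "summable (\<lambda>m. M * (bin m * (\<rho> m / (1 - \<rho> m))))"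
    using summable_negative_binomial_geometric[OF t A s] by (intro summable_mult) (simp add: bin_def \<rho>_def)
  then have dominant_summable: "summable (\<lambda>m. bin m * (M * (\<rho> m / (1 - \<rho> m))))"
    by (simp add: mult.left_commute)
  have rows: "(\<lambda>i. bin m * (d i * \<rho> m ^ Suc i)) sums (bin m * (\<Sum>i. d i * \<rho> m ^ Suc i))" for m
  proof -
    have "summable (\<lambda>i. d i * \<rho> m ^ Suc i)"
    proof (rule summable_comparison_test')
      show "summable (\<lambda>i. M * \<rho> m ^ Suc i)"
        using geometric by (intro summable_mult sums_summable)
      show "norm (d i * \<rho> m ^ Suc i) \<le> M * \<rho> m ^ Suc i" for i
        using d[of i] \<rho>(1)[of m] by (simp add: abs_mult mult_right_mono)
    qed
    then show ?thesis
      by (intro sums_mult summable_sums)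
  qed
  have cols: "(\<lambda>m. bin m * (d i * \<rho> m ^ Suc i)) sums (d i * (A ^ Suc i * (t ^ Suc i / (1 - t ^ Suc i)) ^ s))" for i
    using sums_mult[OF sums_negative_binomial_power[OF t s, of "Suc i" A], of "d i"]
    by (simp only: bin_def \<rho>_def mult.left_commute)
  from sums_swap_dominated[where a = "\<lambda>m i. bin m * (d i * \<rho> m ^ Suc i)",
      OF dom dominant dominant_summable rows cols]
  show "summable (\<lambda>i. d i * A ^ Suc i * (t ^ Suc i / (1 - t ^ Suc i)) ^ s)"
    and "(\<lambda>m. real ((m + s - 1) choose (s - 1)) * (\<Sum>i. d i * (A * t ^ (m + s)) ^ Suc i))
           sums (\<Sum>i. d i * A ^ Suc i * (t ^ Suc i / (1 - t ^ Suc i)) ^ s)"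
    unfolding bin_def \<rho>_def mult.assoc by blast+
qed

definition xn_factor :: "nat set \<Rightarrow> real \<Rightarrow> real" where
  "xn_factor S r = (\<Prod>j\<in>S. (r ^ j - 1) powr (1 / real j))"

definition weight :: "real \<Rightarrow> nat \<Rightarrow> nat \<Rightarrow> real" where
  "weight r n j = (r ^ j - 1) powr (real n / real j) / (r ^ n - 1)"

lemma xn_eq_xn_factor: "xn S r x n = xn_factor S r * x / r ^ n"
  by (simp add: xn_def xn_factor_def)

lemma xn_factor_pos:
  assumes "r > 1" and "\<And>j. j \<in> S \<Longrightarrow> j \<ge> 1"
  shows "0 < xn_factor S r"
  unfolding xn_factor_def
proof (intro prod_pos)
  fix j assume "j \<in> S"
  then have "1 < r ^ j"
    using assms by (intro one_less_power) force+
  then show "0 < (r ^ j - 1) powr (1 / real j)"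
    by simp
qed

lemma xn_factor_less:
  assumes r: "r > 1" and S: "finite S" "S \<noteq> {}" "\<And>j. j \<in> S \<Longrightarrow> j \<ge> 1"
  shows "xn_factor S r < r ^ card S"
proof -
  have less: "(r ^ j - 1) powr (1 / real j) < r" if "j \<in> S" for j
  proof -
    have "(r ^ j - 1) powr (1 / real j) < (r ^ j) powr (1 / real j)"
      using S(3)[OF that] r by (intro powr_less_mono2) (auto simp: one_less_power)
    also have "\<dots> = r"
      using S(3)[OF that] r by (simp add: powr_realpow[symmetric] powr_powr)
    finally show ?thesis .
  qed
  obtain j where "j \<in> S"
    using S(2) by blast
  with S r less show ?thesis
    unfolding xn_factor_def
    by (intro prod_mono_strict[of j S _ "\<lambda>_. r", simplified])
       (auto simp: one_less_power less_imp_le)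
qed

lemma power_xn_factor:
  assumes r: "r > 1" and S: "\<And>j. j \<in> S \<Longrightarrow> j \<ge> 1"
  shows "xn_factor S r ^ n / (r ^ n - 1) ^ card S = (\<Prod>j\<in>S. weight r n j)"
proof -
  have "xn_factor S r ^ n = (\<Prod>j\<in>S. (r ^ j - 1) powr (real n / real j))"
    unfolding xn_factor_def prod_power_distrib
  proof (rule prod.cong[OF refl])
    fix j assume "j \<in> S"
    then have "r ^ j - 1 > 0"
      using S r by (force intro: one_less_power)
    then show "((r ^ j - 1) powr (1 / real j)) ^ n = (r ^ j - 1) powr (real n / real j)"
      by (simp add: powr_realpow[symmetric] powr_powr)
  qed
  then show ?thesis
    by (simp add: weight_def prod_dividef)
qed

lemma Pf_eq_exp:
  fixes f :: "real \<Rightarrow> real" and d :: "nat \<Rightarrow> real"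
  assumes f: "\<And>\<rho>. 0 \<le> \<rho> \<Longrightarrow> \<rho> \<le> 1 \<Longrightarrow> f (x * \<rho>) = exp (\<Sum>i. d i * \<rho> ^ Suc i)"
    and d: "\<And>i. \<bar>d i\<bar> \<le> M" and r: "r > 1"
    and S: "finite S" "S \<noteq> {}" "\<And>j. j \<in> S \<Longrightarrow> j \<ge> 1"
  shows "summable (\<lambda>i. d i * (\<Prod>j\<in>S. weight r (Suc i) j))"
    and "Pf f S r x = exp (\<Sum>i. d i * (\<Prod>j\<in>S. weight r (Suc i) j))"
proof -
  define A where "A = xn_factor S r"
  define t where "t = 1 / r"
  have t: "0 \<le> t" "t < 1"
    using r by (auto simp: t_def)
  have A: "0 \<le> A" "A * t ^ card S < 1"
    using xn_factor_pos[of r S] xn_factor_less[OF r S] r S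
    by (auto simp: A_def t_def power_one_over)
  have card: "card S \<ge> 1"
    using S by (simp add: Suc_le_eq card_gt_0_iff)
  have coeff: "d i * A ^ Suc i * (t ^ Suc i / (1 - t ^ Suc i)) ^ card S
      = d i * (\<Prod>j\<in>S. weight r (Suc i) j)" for i
  proof -
    have "(t ^ Suc i / (1 - t ^ Suc i)) ^ card S = 1 / (r ^ Suc i - 1) ^ card S"
      using one_less_power[OF r, of "Suc i"] r by (simp add: t_def power_one_over field_simps)
    then have "A ^ Suc i * (t ^ Suc i / (1 - t ^ Suc i)) ^ card S = A ^ Suc i / (r ^ Suc i - 1) ^ card S"
      by simp
    also have "\<dots> = (\<Prod>j\<in>S. weight r (Suc i) j)"
      unfolding A_def by (rule power_xn_factor) (use r S in auto)
    finally show ?thesis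
      by (simp only: mult.assoc)
  qed
  note series = sums_negative_binomial_power_series[of d M, OF d t A card]
  show summable: "summable (\<lambda>i. d i * (\<Prod>j\<in>S. weight r (Suc i) j))"
    using series(1) by (simp only: coeff)
  have factor: "f (xn S r x (m + card S)) ^ ((m + card S - 1) choose (card S - 1))
      = exp (real ((m + card S - 1) choose (card S - 1)) * (\<Sum>i. d i * (A * t ^ (m + card S)) ^ Suc i))"
    for m
  proof -
    have "0 \<le> A * t ^ (m + card S)" "A * t ^ (m + card S) \<le> 1"
      using A t mult_left_mono[OF power_decreasing[of "card S" "m + card S" t], of A]
      by auto
    moreover have "xn S r x (m + card S) = x * (A * t ^ (m + card S))"
      by (simp add: xn_eq_xn_factor A_def t_def power_one_over)
    ultimately show ?thesis
      by (simp add: f exp_of_nat_mult)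
  qed
  have sums: "(\<lambda>m. real ((m + card S - 1) choose (card S - 1)) * (\<Sum>i. d i * (A * t ^ (m + card S)) ^ Suc i))
      sums (\<Sum>i. d i * (\<Prod>j\<in>S. weight r (Suc i) j))"
    using series(2) by (simp only: coeff)
  show "Pf f S r x = exp (\<Sum>i. d i * (\<Prod>j\<in>S. weight r (Suc i) j))"
    unfolding Pf_def factor prodinf_exp[OF sums_summable[OF sums]] sums_unique[OF sums, symmetric] ..
qed

lemma powr_add_one_le:
  fixes y p :: real
  assumes "0 \<le> y" "1 \<le> p"
  shows "y powr p + 1 \<le> (y + 1) powr p"
proof -
  have "y powr p = y * y powr (p - 1)" "(y + 1) powr p = (y + 1) * (y + 1) powr (p - 1)"
    using assms powr_mult_base[of y "p - 1"] powr_mult_base[of "y + 1" "p - 1"] by simp_all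
  moreover have "y * y powr (p - 1) \<le> y * (y + 1) powr (p - 1)"
    using assms by (intro mult_left_mono powr_mono2) auto
  moreover have "1 \<le> (y + 1) powr (p - 1)"
    using assms by (intro ge_one_powr_ge_zero) auto
  ultimately show ?thesis
    by (simp add: algebra_simps)
qed

lemma weight_nonneg:
  assumes "r > 1" "n \<ge> 1"
  shows "0 \<le> weight r n j"
proof -
  have "1 < r ^ n"
    using assms by (intro one_less_power) auto
  then show ?thesis
    by (simp add: weight_def)
qed

lemma weight_self:
  assumes "r > 1" "n \<ge> 1"
  shows "weight r n n = 1"
proof -
  have "1 < r ^ n"
    using assms by (intro one_less_power) auto
  then show ?thesis
    by (simp add: weight_def)
qed

lemma weight_le_one:
  assumes r: "r > 1" and j: "1 \<le> j" "j \<le> n"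
  shows "weight r n j \<le> 1"
proof -
  have "(r ^ j - 1) powr (real n / real j) + 1 \<le> (r ^ j - 1 + 1) powr (real n / real j)"
    using one_less_power[OF r, of j] j by (intro powr_add_one_le) auto
  also have "\<dots> = r ^ n"
    using r j by (simp add: powr_realpow[symmetric] powr_powr)
  finally show ?thesis
    using one_less_power[OF r, of n] j by (simp add: weight_def)
qed

lemma weight_le_powr:
  assumes r: "r > 1" and j: "1 \<le> j" "j \<le> n"
  shows "weight r n j \<le> (r ^ j - 1) powr (real n / real j - 1)"
proof -
  have pos: "0 < r ^ j - 1"
    using one_less_power[OF r, of j] j by simp
  have le: "r ^ j - 1 \<le> r ^ n - 1"
    using r j by (simp add: power_increasing)
  have "(r ^ j - 1) powr (real n / real j) = (r ^ j - 1) * (r ^ j - 1) powr (real n / real j - 1)"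
    using powr_mult_base[of "r ^ j - 1" "real n / real j - 1"] pos by simp
  also have "\<dots> \<le> (r ^ n - 1) * (r ^ j - 1) powr (real n / real j - 1)"
    using le by (intro mult_right_mono) auto
  finally show ?thesis
    using pos le by (simp add: weight_def divide_le_eq mult.commute)
qed

lemma tendsto_power_minus_one_powr:
  fixes p :: real
  assumes "p > 0"
  shows "((\<lambda>r::real. (r ^ j - 1) powr p) \<longlongrightarrow> 0) (at_right 1)"
proof (rule tendsto_zero_powrI)
  have "((\<lambda>r::real. r ^ j - 1) \<longlongrightarrow> 1 ^ j - 1) (at_right 1)"
    by (intro tendsto_intros)
  then show "((\<lambda>r::real. r ^ j - 1) \<longlongrightarrow> 0) (at_right 1)"
    by simp
  show "\<forall>\<^sub>F r in at_right 1. 0 \<le> (r::real) ^ j - 1"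
    using eventually_at_right_less[of "1::real"] by eventually_elim (simp add: one_le_power)
qed (use assms in auto)

lemma tendsto_weight_zero:
  assumes j: "1 \<le> j" "j < k"
  shows "((\<lambda>r. weight r k j) \<longlongrightarrow> 0) (at_right 1)"
proof (rule Lim_null_comparison)
  show "\<forall>\<^sub>F r in at_right 1. norm (weight r k j) \<le> (r ^ j - 1) powr (real k / real j - 1)"
    using eventually_at_right_less[of "1::real"]
    by eventually_elim (use j weight_nonneg weight_le_powr in auto)
  show "((\<lambda>r. (r ^ j - 1) powr (real k / real j - 1)) \<longlongrightarrow> 0) (at_right 1)"
    using j by (intro tendsto_power_minus_one_powr) simp
qed

lemma summable_geometric_dominated:
  fixes f :: "nat \<Rightarrow> real"
  assumes f: "\<And>i. \<bar>f i\<bar> \<le> C * q ^ i" and q: "0 \<le> q" "q < 1"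
  shows "summable f" and "\<bar>suminf f\<bar> \<le> C / (1 - q)"
proof -
  have geometric: "(\<lambda>i. C * q ^ i) sums (C / (1 - q))"
    using q sums_mult[OF geometric_sums[of q], of C] by (simp add: divide_inverse)
  have abs: "summable (\<lambda>i. \<bar>f i\<bar>)"
    using f by (intro summable_comparison_test'[OF sums_summable[OF geometric]]) auto
  then show "summable f"
    by (rule summable_rabs_cancel)
  have "\<bar>suminf f\<bar> \<le> (\<Sum>i. \<bar>f i\<bar>)"
    using abs by (rule summable_rabs)
  also have "\<dots> \<le> C / (1 - q)"
    using f abs geometric by (intro sums_le[OF _ summable_sums]) auto
  finally show "\<bar>suminf f\<bar> \<le> C / (1 - q)" .
qed

lemma suminf_dominated_by_single_term:
  fixes d g :: "nat \<Rightarrow> real"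
  assumes d: "\<And>n. \<bar>d n\<bar> \<le> M" and vanish: "\<And>n. n < k \<Longrightarrow> g n = 0"
    and bound: "\<And>n. n > k \<Longrightarrow> \<bar>g n\<bar> \<le> q ^ (n - k)" and small: "q < 1/2"
  shows "\<bar>(\<Sum>n. d n * g n) - d k * g k\<bar> \<le> 2 * M * q"
proof -
  have M: "0 \<le> M"
    using d[of 0] by linarith
  have q: "0 \<le> q" "q < 1"
    using bound[of "Suc k"] small by auto
  have tail: "\<bar>d (i + Suc k) * g (i + Suc k)\<bar> \<le> (M * q) * q ^ i" for i
  proof -
    have "\<bar>d (i + Suc k) * g (i + Suc k)\<bar> \<le> M * q ^ Suc i"
      unfolding abs_mult using d bound[of "i + Suc k"] M by (intro mult_mono) auto
    then show ?thesis
      by (simp add: mult.assoc)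
  qed
  note T = summable_geometric_dominated[OF tail q]
  have "summable (\<lambda>n. d n * g n)"
    using T(1) summable_iff_shift[of "\<lambda>n. d n * g n" "Suc k"] by simp
  then have "(\<Sum>n. d n * g n) = (\<Sum>i. d (i + Suc k) * g (i + Suc k)) + (\<Sum>n<Suc k. d n * g n)"
    by (rule suminf_split_initial_segment)
  also have "(\<Sum>n<Suc k. d n * g n) = d k * g k"
    using vanish by simp
  finally have "\<bar>(\<Sum>n. d n * g n) - d k * g k\<bar> \<le> M * q / (1 - q)"
    using T(2) by simp
  also have "\<dots> = M * q * (1 / (1 - q))"
    by simp
  also have "\<dots> \<le> M * q * 2"
    using M q small by (intro mult_left_mono) (auto simp: field_simps)
  finally show ?thesis
    by simp
qed

lemma tendsto_suminf_single_term:
  fixes d :: "nat \<Rightarrow> real" and G :: "'a \<Rightarrow> nat \<Rightarrow> real"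
  assumes d: "\<And>n. \<bar>d n\<bar> \<le> M"
    and vanish: "\<forall>\<^sub>F r in F. \<forall>n<k. G r n = 0"
    and bound: "\<forall>\<^sub>F r in F. \<forall>n>k. \<bar>G r n\<bar> \<le> q r ^ (n - k)"
    and q: "(q \<longlongrightarrow> 0) F" and Gk: "((\<lambda>r. G r k) \<longlongrightarrow> 1) F"
  shows "((\<lambda>r. \<Sum>n. d n * G r n) \<longlongrightarrow> d k) F"
proof -
  have "\<forall>\<^sub>F r in F. q r < 1/2"
    using q by (rule order_tendstoD) simp
  with vanish bound have "\<forall>\<^sub>F r in F. norm ((\<Sum>n. d n * G r n) - d k * G r k) \<le> 2 * M * q r"
  proof eventually_elim
    case (elim r)
    then show ?case
      using suminf_dominated_by_single_term[OF d, of k "G r" "q r"] by simp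
  qed
  then have "((\<lambda>r. (\<Sum>n. d n * G r n) - d k * G r k) \<longlongrightarrow> 0) F"
    by (rule Lim_null_comparison[OF _ tendsto_mult_right_zero[OF q]])
  then have "((\<lambda>r. ((\<Sum>n. d n * G r n) - d k * G r k) + d k * G r k) \<longlongrightarrow> 0 + d k * 1) F"
    by (intro tendsto_intros Gk)
  then show ?thesis
    by simp
qed

lemma weight_prod_eq_zero:
  assumes "r > 1" "1 \<le> n" "n < k"
  shows "weight r n k * (\<Prod>j\<in>{1..<k}. 1 - weight r n j) = 0"
proof -
  have "n \<in> {1..<k}" "1 - weight r n n = 0"
    using assms by (auto simp: weight_self)
  then show ?thesis
    by (metis finite_atLeastLessThan mult_zero_right prod_zero_iff)
qed

lemma abs_weight_prod_le:
  assumes r: "r > 1" and k: "1 \<le> k" "k \<le> n"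
  shows "\<bar>weight r n k * (\<Prod>j\<in>{1..<k}. 1 - weight r n j)\<bar> \<le> ((r ^ k - 1) powr (1 / real k)) ^ (n - k)"
proof -
  have w: "0 \<le> weight r n j" "weight r n j \<le> 1" if "1 \<le> j" "j \<le> n" for j
    using weight_nonneg[OF r] weight_le_one[OF r that] that by auto
  have "(\<Prod>j\<in>{1..<k}. 1 - weight r n j) \<in> {0..1}"
    using k w by (auto intro!: prod_nonneg prod_le_1)
  then have "\<bar>weight r n k * (\<Prod>j\<in>{1..<k}. 1 - weight r n j)\<bar> \<le> weight r n k"
    using w[of k] k by (auto simp: abs_mult intro!: mult_left_le)
  also have "\<dots> \<le> (r ^ k - 1) powr (real n / real k - 1)"
    by (rule weight_le_powr[OF r k])
  also have "\<dots> = ((r ^ k - 1) powr (1 / real k)) ^ (n - k)"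
    using k one_less_power[OF r, of k]
    by (simp add: powr_realpow[symmetric] powr_powr of_nat_diff diff_divide_distrib)
  finally show ?thesis .
qed

lemma tendsto_suminf_weights:
  fixes d :: "nat \<Rightarrow> real"
  assumes d: "\<And>i. \<bar>d i\<bar> \<le> M" and k: "k \<ge> 1"
  shows "((\<lambda>r. \<Sum>i. d i * (weight r (Suc i) k * (\<Prod>j\<in>{1..<k}. 1 - weight r (Suc i) j)))
          \<longlongrightarrow> d (k - 1)) (at_right 1)"
proof (rule tendsto_suminf_single_term[OF d])
  have r: "\<forall>\<^sub>F r in at_right 1. r > (1::real)"
    by (rule eventually_at_right_less)
  then show "\<forall>\<^sub>F r in at_right 1. \<forall>n<k - 1.
      weight r (Suc n) k * (\<Prod>j\<in>{1..<k}. 1 - weight r (Suc n) j) = 0"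
  proof (eventually_elim, intro allI impI)
    fix r :: real and n assume "r > 1" "n < k - 1"
    then show "weight r (Suc n) k * (\<Prod>j\<in>{1..<k}. 1 - weight r (Suc n) j) = 0"
      by (intro weight_prod_eq_zero) auto
  qed
  from r show "\<forall>\<^sub>F r in at_right 1. \<forall>n>k - 1.
      \<bar>weight r (Suc n) k * (\<Prod>j\<in>{1..<k}. 1 - weight r (Suc n) j)\<bar>
        \<le> ((r ^ k - 1) powr (1 / real k)) ^ (n - (k - 1))"
  proof (eventually_elim, intro allI impI)
    fix r :: real and n assume "r > 1" "n > k - 1"
    moreover have "k \<le> Suc n" "Suc n - k = n - (k - 1)"
      using \<open>n > k - 1\<close> k by auto
    ultimately show "\<bar>weight r (Suc n) k * (\<Prod>j\<in>{1..<k}. 1 - weight r (Suc n) j)\<bar>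
        \<le> ((r ^ k - 1) powr (1 / real k)) ^ (n - (k - 1))"
      using abs_weight_prod_le[of r k "Suc n"] k by (simp only:)
  qed
  show "((\<lambda>r. (r ^ k - 1) powr (1 / real k)) \<longlongrightarrow> 0) (at_right 1)"
    using k by (intro tendsto_power_minus_one_powr) simp
  have "((\<lambda>r. \<Prod>j\<in>{1..<k}. 1 - weight r k j) \<longlongrightarrow> (\<Prod>j\<in>{1..<k}. 1 - 0)) (at_right 1)"
    by (intro tendsto_prod tendsto_diff tendsto_const tendsto_weight_zero) auto
  then have lim: "((\<lambda>r. \<Prod>j\<in>{1..<k}. 1 - weight r k j) \<longlongrightarrow> 1) (at_right 1)"
    by simp
  have "\<forall>\<^sub>F r in at_right 1. (\<Prod>j\<in>{1..<k}. 1 - weight r k j)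
      = weight r k k * (\<Prod>j\<in>{1..<k}. 1 - weight r k j)"
    using r by eventually_elim (simp only: weight_self[OF _ k] mult_1_left)
  from tendsto_cong[OF this] lim
  have "((\<lambda>r. weight r k k * (\<Prod>j\<in>{1..<k}. 1 - weight r k j)) \<longlongrightarrow> 1) (at_right 1)"
    by (rule iffD1)
  moreover have "Suc (k - 1) = k"
    using k by simp
  ultimately show "((\<lambda>r. weight r (Suc (k - 1)) k * (\<Prod>j\<in>{1..<k}. 1 - weight r (Suc (k - 1)) j))
      \<longlongrightarrow> 1) (at_right 1)"
    by (simp only:)
qed

lemma subsets_max_eq_insert_image:
  assumes "k \<ge> 1"
  shows "subsets_max k = insert k ` Pow {1..<k}"
proof
  show "subsets_max k \<subseteq> insert k ` Pow {1..<k}"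
  proof
    fix S assume "S \<in> subsets_max k"
    then have "S = insert k (S - {k})" "S - {k} \<subseteq> {1..<k}"
      by (auto simp: subsets_max_def)
    then show "S \<in> insert k ` Pow {1..<k}"
      by blast
  qed
  show "insert k ` Pow {1..<k} \<subseteq> subsets_max k"
    using assms by (auto simp: subsets_max_def)
qed

lemma finite_subsets_max: "finite (subsets_max k)"
  by (rule finite_subset[of _ "Pow {1..k}"]) (auto simp: subsets_max_def)

lemma subsets_max_memD:
  assumes "S \<in> subsets_max k"
  shows "finite S" "S \<noteq> {}" "\<And>j. j \<in> S \<Longrightarrow> j \<ge> 1"
  using assms finite_subset[of S "{1..k}"] by (auto simp: subsets_max_def)

lemma sum_subsets_max_alternating:
  fixes w :: "nat \<Rightarrow> real"
  assumes k: "k \<ge> 1"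
  shows "(\<Sum>S\<in>subsets_max k. (-1) ^ (card S + 1) * prod w S) = w k * (\<Prod>j\<in>{1..<k}. 1 - w j)"
proof -
  have inj: "inj_on (insert k) (Pow {1..<k})"
    by (rule inj_onI) (metis Diff_insert_absorb PowD atLeastLessThan_iff less_irrefl subsetD)
  have "(\<Sum>S\<in>subsets_max k. (-1) ^ (card S + 1) * prod w S)
      = (\<Sum>T\<in>Pow {1..<k}. (-1) ^ (card (insert k T) + 1) * prod w (insert k T))"
    unfolding subsets_max_eq_insert_image[OF k] by (simp only: sum.reindex[OF inj] comp_def)
  also have "\<dots> = (\<Sum>T\<in>Pow {1..<k}. w k * (\<Prod>j\<in>T. - w j))"
  proof (rule sum.cong[OF refl])
    fix T assume "T \<in> Pow {1..<k}"
    then have "finite T" "k \<notin> T"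
      by (auto intro: finite_subset)
    then show "(-1) ^ (card (insert k T) + 1) * prod w (insert k T) = w k * (\<Prod>j\<in>T. - w j)"
      by (simp add: prod_uminus)
  qed
  also have "\<dots> = w k * (\<Sum>T\<in>Pow {1..<k}. (\<Prod>j\<in>T. - w j) * (\<Prod>j\<in>{1..<k} - T. 1))"
    by (simp add: sum_distrib_left)
  also have "(\<Sum>T\<in>Pow {1..<k}. (\<Prod>j\<in>T. - w j) * (\<Prod>j\<in>{1..<k} - T. 1)) = (\<Prod>j\<in>{1..<k}. - w j + 1)"
    by (rule prod_add[symmetric]) simp
  finally show ?thesis
    by simp
qed

lemma prod_odd_div_prod_even_exp:
  fixes L :: "'a set \<Rightarrow> real"
  assumes "finite \<S>" and "\<And>S. S \<in> \<S> \<Longrightarrow> P S = exp (L S)"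
  shows "(\<Prod>S\<in>{S\<in>\<S>. odd (card S)}. P S) / (\<Prod>S\<in>{S\<in>\<S>. even (card S)}. P S)
       = exp (\<Sum>S\<in>\<S>. (-1) ^ (card S + 1) * L S)"
proof -
  have "(\<Sum>S\<in>\<S>. (-1) ^ (card S + 1) * L S) = (\<Sum>S\<in>\<S>. if odd (card S) then L S else - L S)"
    by (intro sum.cong) auto
  also have "\<dots> = (\<Sum>S\<in>{S\<in>\<S>. odd (card S)}. L S) - (\<Sum>S\<in>{S\<in>\<S>. even (card S)}. L S)"
    using assms(1) by (simp add: sum.If_cases sum_negf Int_def conj_commute)
  finally show ?thesis
    using assms by (simp add: exp_diff exp_sum)
qed

lemma Pf_ratio_eq_exp:
  fixes f :: "real \<Rightarrow> real" and d :: "nat \<Rightarrow> real"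
  assumes f: "\<And>\<rho>. 0 \<le> \<rho> \<Longrightarrow> \<rho> \<le> 1 \<Longrightarrow> f (x * \<rho>) = exp (\<Sum>i. d i * \<rho> ^ Suc i)"
    and d: "\<And>i. \<bar>d i\<bar> \<le> M" and r: "r > 1" and k: "k \<ge> 1"
  shows "(\<Prod>S\<in>{S\<in>subsets_max k. odd (card S)}. Pf f S r x) /
         (\<Prod>S\<in>{S\<in>subsets_max k. even (card S)}. Pf f S r x)
       = exp (\<Sum>i. d i * (weight r (Suc i) k * (\<Prod>j\<in>{1..<k}. 1 - weight r (Suc i) j)))"
proof -
  define L where "L S = (\<Sum>i. d i * (\<Prod>j\<in>S. weight r (Suc i) j))" for S
  have summable: "summable (\<lambda>i. d i * (\<Prod>j\<in>S. weight r (Suc i) j))" if "S \<in> subsets_max k" for S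
    using Pf_eq_exp(1)[OF f d r subsets_max_memD[OF that]] .
  have Pf: "Pf f S r x = exp (L S)" if "S \<in> subsets_max k" for S
    unfolding L_def using Pf_eq_exp(2)[OF f d r subsets_max_memD[OF that]] .
  have "(\<Sum>S\<in>subsets_max k. (-1) ^ (card S + 1) * L S)
      = (\<Sum>S\<in>subsets_max k. \<Sum>i. (-1) ^ (card S + 1) * (d i * (\<Prod>j\<in>S. weight r (Suc i) j)))"
    unfolding L_def by (intro sum.cong refl suminf_mult[symmetric] summable)
  also have "\<dots> = (\<Sum>i. \<Sum>S\<in>subsets_max k. (-1) ^ (card S + 1) * (d i * (\<Prod>j\<in>S. weight r (Suc i) j)))"
    by (intro suminf_sum[symmetric] summable_mult summable)
  also have "\<dots> = (\<Sum>i. d i * (weight r (Suc i) k * (\<Prod>j\<in>{1..<k}. 1 - weight r (Suc i) j)))"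
  proof (rule suminf_cong)
    fix i
    have "(\<Sum>S\<in>subsets_max k. (-1) ^ (card S + 1) * (d i * (\<Prod>j\<in>S. weight r (Suc i) j)))
        = d i * (\<Sum>S\<in>subsets_max k. (-1) ^ (card S + 1) * (\<Prod>j\<in>S. weight r (Suc i) j))"
      unfolding sum_distrib_left by (simp only: mult.left_commute)
    then show "(\<Sum>S\<in>subsets_max k. (-1) ^ (card S + 1) * (d i * (\<Prod>j\<in>S. weight r (Suc i) j)))
        = d i * (weight r (Suc i) k * (\<Prod>j\<in>{1..<k}. 1 - weight r (Suc i) j))"
      by (simp only: sum_subsets_max_alternating[OF k])
  qed
  finally show ?thesis
    using prod_odd_div_prod_even_exp[OF finite_subsets_max Pf] by (simp only:)
qed

lemma summable_boundE:
  fixes d :: "nat \<Rightarrow> real"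
  assumes "summable d"
  obtains M where "\<And>i. \<bar>d i\<bar> \<le> M"
proof -
  have "Bseq d"
    using summable_LIMSEQ_zero[OF assms] by (rule convergent_imp_Bseq[OF convergentI])
  then show ?thesis
    by (metis BseqE real_norm_def that)
qed

lemma exp_series_at_mult:
  fixes f :: "real \<Rightarrow> real" and c :: "nat \<Rightarrow> real"
  assumes series: "\<forall>y\<in>{min 0 x..max 0 x}. f y = exp (\<Sum>i. c (Suc i) * y ^ Suc i)"
    and \<rho>: "0 \<le> \<rho>" "\<rho> \<le> 1"
  shows "f (x * \<rho>) = exp (\<Sum>i. c (Suc i) * x ^ Suc i * \<rho> ^ Suc i)"
proof -
  have "x * \<rho> \<in> {min 0 x..max 0 x}"
    using \<rho> mult_left_le[of \<rho> x] mult_left_le[of \<rho> "- x"]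
    by (cases "x \<ge> 0") (auto simp: mult_le_0_iff)
  then have "f (x * \<rho>) = exp (\<Sum>i. c (Suc i) * (x * \<rho>) ^ Suc i)"
    using series by blast
  then show ?thesis
    by (simp only: power_mult_distrib mult.assoc)
qed

theorem lemma5:
  fixes f :: "real \<Rightarrow> real" and c :: "nat \<Rightarrow> real" and x :: real and k :: nat
  assumes analytic: "real_analytic_on f {min 0 x..max 0 x}"
    and nonzero: "\<forall>y\<in>{min 0 x..max 0 x}. f y \<noteq> 0"
    and f0: "f 0 = 1"
    and series: "\<forall>y\<in>{min 0 x..max 0 x}.
                   summable (\<lambda>i. c (Suc i) * y ^ Suc i) \<and>
                   f y = exp (\<Sum>i. c (Suc i) * y ^ Suc i)"
    and kpos: "k > 0"
  shows "((\<lambda>r. (\<Prod>S\<in>{S\<in>subsets_max k. odd (card S)}. Pf f S r x) /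
               (\<Prod>S\<in>{S\<in>subsets_max k. even (card S)}. Pf f S r x))
          \<longlongrightarrow> component c k x) (at_right 1)"
proof -
  define d where "d i = c (Suc i) * x ^ Suc i" for i
  have k: "k \<ge> 1"
    using kpos by simp
  have f: "f (x * \<rho>) = exp (\<Sum>i. d i * \<rho> ^ Suc i)" if "0 \<le> \<rho>" "\<rho> \<le> 1" for \<rho>
    unfolding d_def using series that by (intro exp_series_at_mult) auto
  have "x \<in> {min 0 x..max 0 x}"
    by simp
  then have "summable d"
    using series unfolding d_def[abs_def] by blast
  then obtain M where d: "\<And>i. \<bar>d i\<bar> \<le> M"
    using summable_boundE by blast
  have "\<forall>\<^sub>F r in at_right 1.
      exp (\<Sum>i. d i * (weight r (Suc i) k * (\<Prod>j\<in>{1..<k}. 1 - weight r (Suc i) j)))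
      = (\<Prod>S\<in>{S\<in>subsets_max k. odd (card S)}. Pf f S r x) /
        (\<Prod>S\<in>{S\<in>subsets_max k. even (card S)}. Pf f S r x)"
    using eventually_at_right_less[of "1::real"]
    by eventually_elim (rule Pf_ratio_eq_exp[OF f d _ k, symmetric])
  moreover have "((\<lambda>r. exp (\<Sum>i. d i * (weight r (Suc i) k * (\<Prod>j\<in>{1..<k}. 1 - weight r (Suc i) j))))
      \<longlongrightarrow> exp (d (k - 1))) (at_right 1)"
    by (intro tendsto_exp tendsto_suminf_weights[OF d k])
  ultimately have "((\<lambda>r. (\<Prod>S\<in>{S\<in>subsets_max k. odd (card S)}. Pf f S r x) /
      (\<Prod>S\<in>{S\<in>subsets_max k. even (card S)}. Pf f S r x)) \<longlongrightarrow> exp (d (k - 1))) (at_right 1)"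
    by (rule tendsto_cong[THEN iffD1])
  moreover have "exp (d (k - 1)) = component c k x"
    using k by (simp add: d_def component_def)
  ultimately show ?thesis
    by (simp only:)
qed

end
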